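(* Let $X$ be a random variable taking values in $\mathbb{R}^n$ with a density $f$ with respect to Lebesgue measure, let $\varphi:\mathbb{R}^n\to\mathbb{R}$ be a measurable function, and let $a,b>0$. Assume $\mathbb{E}\, e^{\alpha\varphi(X)}<\infty$ for all $\alpha\in(-a,b)$. Let $c:(-a,b)\to\mathbb{R}$ be a smooth function such that the function $\alpha\mapsto e^{-c(\alpha)}\,\mathbb{E}\, e^{\alpha\varphi(X)}$ is log-concave on $(-a,b)$. Then for every $\alpha\in(-a,b)$, $$\mathbb{E}\, e^{\alpha(\varphi(X)-\mathbb{E}\varphi(X))}\le e^{\psi_c(\alpha)},\qquad\text{where } \psi_c(\alpha)=c(\alpha)-c(0)-c'(0)\alpha.$$
   Context: A function $g:I\to(0,\infty)$ on an interval $I$ is log-concave if $\log g$ is concave on $I$. *)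

theory Defs
  imports "HOL-Analysis.Analysis" "HOL-Probability.Probability"
begin

definition smooth_on :: "(real \<Rightarrow> real) \<Rightarrow> real set \<Rightarrow> bool" where
  "smooth_on c S \<longleftrightarrow> (\<forall>k. \<forall>x\<in>S. ((deriv ^^ k) c) differentiable (at x))"

definition log_concave_on :: "real set \<Rightarrow> (real \<Rightarrow> real) \<Rightarrow> bool" where
  "log_concave_on I g \<longleftrightarrow> (\<forall>x\<in>I. g x > 0) \<and> concave_on I (\<lambda>x. ln (g x))"

end

theory Submission
  imports Defs
begin

text \<open>
  Let \<open>Y = \<phi>(X)\<close>, \<open>m = E Y\<close>, \<open>G(\<alpha>) = E exp(\<alpha>(Y - m))\<close> and \<open>\<psi> = \<psi>\<^sub>c\<close>. The function
  \<open>H = ln G - \<psi>\<close> differs from the concave function \<open>\<alpha> \<mapsto> ln (exp(-c \<alpha>) E exp(\<alpha>Y))\<close> by an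
  affine function, so \<open>H\<close> is concave, and \<open>H(0) = 0\<close>. Since \<open>exp x \<ge> 1 + x\<close>, \<open>G \<ge> 1\<close>, so
  \<open>H \<ge> -\<psi>\<close>, and \<open>\<psi>(\<alpha>) = o(\<alpha>)\<close> because \<open>c\<close> is differentiable at 0. Chord slopes of a
  concave function through the origin decrease, so for \<open>s < 0 < t\<close> we get
  \<open>H(t)/t \<le> H(s)/s \<le> \<psi>(s)/|s| \<rightarrow> 0\<close> as \<open>s \<rightarrow> 0\<close>, and symmetrically for \<open>t < 0\<close>.
  Hence \<open>H \<le> 0\<close>, i.e. \<open>G \<le> exp \<psi>\<close>.
\<close>

lemma concave_on_slope_zero_antimono:
  fixes H :: "real \<Rightarrow> real"
  assumes "concave_on I H" "H 0 = 0" "s \<in> I" "t \<in> I" "s < 0" "0 < t" "0 \<in> I"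
  shows "H t / t \<le> H s / s"
proof -
  have "convex_on I (\<lambda>x. - H x)"
    using assms(1) by (simp add: concave_on_def)
  from order_trans[OF convex_on_slope_le[OF this assms(3,4,5,6)]]
  show ?thesis
    using assms(2) by simp
qed

lemma concave_on_nonpos_if_above_little_o:
  fixes H \<psi> :: "real \<Rightarrow> real" and a b t :: real
  assumes conc: "concave_on {-a<..<b} H" and "a > 0" "b > 0" and H0: "H 0 = 0"
    and above: "\<And>s. s \<in> {-a<..<b} \<Longrightarrow> - \<psi> s \<le> H s"
    and little_o: "((\<lambda>y. \<psi> y / y) \<longlongrightarrow> 0) (at 0)"
    and t: "t \<in> {-a<..<b}"
  shows "H t \<le> 0"
proof -
  have zero: "0 \<in> {-a<..<b}" using assms(2,3) by simp
  have "((\<lambda>y. - \<psi> y / y) \<longlongrightarrow> 0) (at 0)"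
    using tendsto_minus[OF little_o] by simp
  then have lim_left: "((\<lambda>y. - \<psi> y / y) \<longlongrightarrow> 0) (at_left 0)"
    and lim_right: "((\<lambda>y. - \<psi> y / y) \<longlongrightarrow> 0) (at_right 0)"
    by (simp_all add: filterlim_at_split)
  consider "0 < t" | "t < 0" | "t = 0" by linarith
  then show ?thesis
  proof cases
    case 1
    have "\<forall>\<^sub>F s in at_left 0. s \<in> {-a<..<0}"
      using assms(2) by (intro eventually_at_left_real) simp
    then have "\<forall>\<^sub>F s in at_left 0. H t / t \<le> - \<psi> s / s"
    proof (rule eventually_mono)
      fix s assume s: "s \<in> {-a<..<0}"
      then have sI: "s \<in> {-a<..<b}" using assms(3) by simp
      then have "H s / s \<le> - \<psi> s / s"
        using above s by (intro divide_right_mono_neg) auto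
      with concave_on_slope_zero_antimono[OF conc H0 sI t _ 1 zero] s
      show "H t / t \<le> - \<psi> s / s" by simp
    qed
    then have "H t / t \<le> 0"
      by (rule tendsto_le[OF trivial_limit_at_left_real lim_left tendsto_const])
    with 1 show ?thesis by (simp add: divide_le_0_iff)
  next
    case 2
    have "\<forall>\<^sub>F s in at_right 0. s \<in> {0<..<b}"
      using assms(3) by (intro eventually_at_right_real) simp
    then have "\<forall>\<^sub>F s in at_right 0. - \<psi> s / s \<le> H t / t"
    proof (rule eventually_mono)
      fix s assume s: "s \<in> {0<..<b}"
      then have sI: "s \<in> {-a<..<b}" using assms(2) by simp
      then have "- \<psi> s / s \<le> H s / s"
        using above s by (intro divide_right_mono) auto
      with concave_on_slope_zero_antimono[OF conc H0 t sI 2 _ zero] s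
      show "- \<psi> s / s \<le> H t / t" by simp
    qed
    then have "0 \<le> H t / t"
      by (rule tendsto_le[OF trivial_limit_at_right_real tendsto_const lim_right])
    with 2 show ?thesis by (simp add: zero_le_divide_iff)
  qed (simp add: H0)
qed

lemma differentiable_remainder_little_o:
  fixes c :: "real \<Rightarrow> real"
  assumes "c differentiable (at x)"
  shows "((\<lambda>y. (c y - c x - deriv c x * (y - x)) / (y - x)) \<longlongrightarrow> 0) (at x)"
proof -
  have "((\<lambda>y. (c y - c x) / (y - x)) \<longlongrightarrow> deriv c x) (at x)"
    using assms by (simp add: DERIV_deriv_iff_real_differentiable[symmetric] has_field_derivative_iff)
  then have "((\<lambda>y. (c y - c x) / (y - x) - deriv c x) \<longlongrightarrow> 0) (at x)"
    using tendsto_diff[OF _ tendsto_const[of "deriv c x"]] by fastforce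
  moreover have "\<forall>\<^sub>F y in at x. (c y - c x) / (y - x) - deriv c x
                    = (c y - c x - deriv c x * (y - x)) / (y - x)"
    unfolding eventually_at_filter by (auto simp: diff_divide_distrib)
  ultimately show ?thesis
    using tendsto_cong by force
qed

lemma integrable_if_exp_moments:
  fixes Y :: "'s \<Rightarrow> real"
  assumes [measurable]: "Y \<in> borel_measurable M" and "t > 0"
    and "integrable M (\<lambda>\<omega>. exp (t * Y \<omega>))" "integrable M (\<lambda>\<omega>. exp (- t * Y \<omega>))"
  shows "integrable M Y"
proof (rule Bochner_Integration.integrable_bound)
  show "integrable M (\<lambda>\<omega>. (exp (t * Y \<omega>) + exp (- t * Y \<omega>)) / t)"
    using assms(3,4) by auto
  show "AE \<omega> in M. norm (Y \<omega>) \<le> norm ((exp (t * Y \<omega>) + exp (- t * Y \<omega>)) / t)"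
  proof (rule AE_I2)
    fix \<omega>
    have "t * \<bar>Y \<omega>\<bar> \<le> exp (t * \<bar>Y \<omega>\<bar>)"
      using exp_ge_add_one_self[of "t * \<bar>Y \<omega>\<bar>"] by linarith
    also have "\<dots> \<le> exp (t * Y \<omega>) + exp (- t * Y \<omega>)"
      by (cases "Y \<omega> \<ge> 0") (auto simp: add_increasing add_increasing2)
    finally show "norm (Y \<omega>) \<le> norm ((exp (t * Y \<omega>) + exp (- t * Y \<omega>)) / t)"
      using \<open>t > 0\<close> by (simp add: field_simps)
  qed
qed simp

lemma exp_mult_diff:
  fixes \<alpha> y m :: real
  shows "exp (\<alpha> * (y - m)) = exp (- \<alpha> * m) * exp (\<alpha> * y)"
  by (simp add: exp_add[symmetric] algebra_simps)

lemma concave_on_affine: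
  fixes p q :: real
  assumes "convex S"
  shows "concave_on S (\<lambda>x. p + q * x)"
  unfolding concave_on_iff
proof (intro conjI assms ballI allI impI)
  fix x y u v :: real assume "u + v = 1"
  have "u * (p + q * x) + v * (p + q * y) = (u + v) * p + q * (u * x + v * y)"
    by (simp add: algebra_simps)
  with \<open>u + v = 1\<close>
  show "u * (p + q * x) + v * (p + q * y) \<le> p + q * (u *\<^sub>R x + v *\<^sub>R y)"
    by simp
qed

lemma (in prob_space) integral_exp_centered_ge_one:
  fixes Y :: "'a \<Rightarrow> real"
  assumes "integrable M Y" "integrable M (\<lambda>\<omega>. exp (\<alpha> * Y \<omega>))"
  shows "1 \<le> (\<integral>\<omega>. exp (\<alpha> * (Y \<omega> - expectation Y)) \<partial>M)"
proof -
  have int_exp: "integrable M (\<lambda>\<omega>. exp (\<alpha> * (Y \<omega> - expectation Y)))"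
    using assms(2) by (simp add: exp_mult_diff)
  have "1 = (\<integral>\<omega>. 1 + \<alpha> * (Y \<omega> - expectation Y) \<partial>M)"
    using assms(1) by (simp add: prob_space algebra_simps)
  also have "\<dots> \<le> (\<integral>\<omega>. exp (\<alpha> * (Y \<omega> - expectation Y)) \<partial>M)"
    using assms(1) int_exp by (intro integral_mono) simp_all
  finally show ?thesis .
qed

lemma (in prob_space) centered_mgf_le_exp_if_log_concave:
  fixes Y :: "'a \<Rightarrow> real" and c :: "real \<Rightarrow> real" and a b :: real
  assumes [measurable]: "Y \<in> borel_measurable M" and "a > 0" "b > 0"
    and int_exp: "\<And>\<alpha>. \<alpha> \<in> {-a<..<b} \<Longrightarrow> integrable M (\<lambda>\<omega>. exp (\<alpha> * Y \<omega>))"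
    and "c differentiable (at 0)"
    and log_concave: "log_concave_on {-a<..<b} (\<lambda>\<alpha>. exp (- c \<alpha>) * (\<integral>\<omega>. exp (\<alpha> * Y \<omega>) \<partial>M))"
    and \<alpha>: "\<alpha> \<in> {-a<..<b}"
  shows "(\<integral>\<omega>. exp (\<alpha> * (Y \<omega> - expectation Y)) \<partial>M) \<le> exp (c \<alpha> - c 0 - deriv c 0 * \<alpha>)"
proof -
  define I where "I = {-a<..<b}"
  define L where "L \<alpha> = ln (exp (- c \<alpha>) * (\<integral>\<omega>. exp (\<alpha> * Y \<omega>) \<partial>M))" for \<alpha>
  define G where "G \<alpha> = (\<integral>\<omega>. exp (\<alpha> * (Y \<omega> - expectation Y)) \<partial>M)" for \<alpha>
  define \<psi> where "\<psi> \<alpha> = c \<alpha> - c 0 - deriv c 0 * \<alpha>" for \<alpha>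
  define H where "H \<alpha> = L \<alpha> + (c 0 + (deriv c 0 - expectation Y) * \<alpha>)" for \<alpha>
  define t where "t = min a b / 2"
  have t: "t > 0" "t \<in> {-a<..<b}" "- t \<in> {-a<..<b}"
    using assms(2,3) by (auto simp: t_def)
  have "integrable M Y"
    using integrable_if_exp_moments[OF assms(1) t(1) int_exp[OF t(2)] int_exp[OF t(3)]] .
  then have G_ge_1: "1 \<le> G s" if "s \<in> I" for s
    using int_exp that by (simp add: G_def I_def integral_exp_centered_ge_one)
  have H_eq: "H s = ln (G s) - \<psi> s" if "s \<in> I" for s
  proof -
    have "0 < exp (- c s) * (\<integral>\<omega>. exp (s * Y \<omega>) \<partial>M)"
      using log_concave that by (simp add: log_concave_on_def I_def)
    moreover have "G s = exp (- s * expectation Y) * (\<integral>\<omega>. exp (s * Y \<omega>) \<partial>M)"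
      by (simp add: G_def exp_mult_diff)
    ultimately show ?thesis
      by (simp add: H_def L_def \<psi>_def ln_mult zero_less_mult_iff algebra_simps)
  qed
  have "concave_on I H"
    unfolding H_def I_def
    using log_concave by (intro concave_on_add concave_on_affine) (simp_all add: log_concave_on_def L_def)
  moreover have "H 0 = 0"
    by (simp add: H_def L_def prob_space)
  moreover have "- \<psi> s \<le> H s" if "s \<in> I" for s
    using G_ge_1[OF that] H_eq[OF that] by simp
  moreover have "((\<lambda>y. \<psi> y / y) \<longlongrightarrow> 0) (at 0)"
    using differentiable_remainder_little_o[OF assms(5)] by (simp add: \<psi>_def)
  ultimately have "H \<alpha> \<le> 0"
    using assms(2,3) \<alpha> by (intro concave_on_nonpos_if_above_little_o[of a b H \<psi>]) (simp_all add: I_def)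
  then have "ln (G \<alpha>) \<le> \<psi> \<alpha>"
    using H_eq \<alpha> by (simp add: I_def)
  moreover have "0 < G \<alpha>"
    using G_ge_1[of \<alpha>] \<alpha> unfolding I_def by fastforce
  ultimately have "G \<alpha> \<le> exp (\<psi> \<alpha>)"
    by (metis exp_le_cancel_iff exp_ln)
  then show ?thesis
    by (simp add: G_def \<psi>_def)
qed

theorem lemma2p3:
  fixes M :: "'s measure" and X :: "'s \<Rightarrow> real ^ 'n"
    and f :: "real ^ 'n \<Rightarrow> ennreal" and \<phi> :: "real ^ 'n \<Rightarrow> real"
    and a b :: real and c :: "real \<Rightarrow> real"
  assumes "prob_space M"
    and "distributed M lborel X f"
    and "\<phi> \<in> borel_measurable borel"
    and "a > 0" and "b > 0"
    and "\<And>\<alpha>. \<alpha> \<in> {-a<..<b} \<Longrightarrow> integrable M (\<lambda>\<omega>. exp (\<alpha> * \<phi> (X \<omega>)))"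
    and "smooth_on c {-a<..<b}"
    and "log_concave_on {-a<..<b}
           (\<lambda>\<alpha>. exp (- c \<alpha>) * (\<integral>\<omega>. exp (\<alpha> * \<phi> (X \<omega>)) \<partial>M))"
  shows "\<forall>\<alpha>\<in>{-a<..<b}.
           (\<integral>\<omega>. exp (\<alpha> * (\<phi> (X \<omega>) - (\<integral>\<omega>'. \<phi> (X \<omega>') \<partial>M))) \<partial>M)
             \<le> exp (c \<alpha> - c 0 - deriv c 0 * \<alpha>)"
proof
  interpret prob_space M by fact
  fix \<alpha> assume "\<alpha> \<in> {-a<..<b}"
  have "X \<in> borel_measurable M"
    using distributed_measurable[OF assms(2)] by simp
  then have "(\<lambda>\<omega>. \<phi> (X \<omega>)) \<in> borel_measurable M"
    using assms(3) by measurable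
  moreover have "\<forall>x\<in>{-a<..<b}. (deriv ^^ 0) c differentiable (at x)"
    using assms(7) unfolding smooth_on_def by blast
  then have "c differentiable (at 0)"
    using assms(4,5) by simp
  ultimately show "(\<integral>\<omega>. exp (\<alpha> * (\<phi> (X \<omega>) - (\<integral>\<omega>'. \<phi> (X \<omega>') \<partial>M))) \<partial>M)
                     \<le> exp (c \<alpha> - c 0 - deriv c 0 * \<alpha>)"
    using centered_mgf_le_exp_if_log_concave[of "\<lambda>\<omega>. \<phi> (X \<omega>)"] assms(4-6,8) \<open>\<alpha> \<in> _\<close>
    by blast
qed

end
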